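(* Let $f(z)=z+\sum_{n=2}^{\infty}a_nz^n$ belong to $\mathcal{S}^*_{ch}$, and let $$\gamma_1=\tfrac12 a_2,\qquad \gamma_2=\tfrac12\Big(a_3-\tfrac12 a_2^2\Big),\qquad \gamma_3=\tfrac12\Big(a_4-a_2a_3+\tfrac13 a_2^3\Big)$$ be its first three logarithmic coefficients. Then $$|H_{2,1}(F_f/2)|=|\gamma_1\gamma_3-\gamma_2^2|=\tfrac{1}{48}\left|a_2^4-12a_3^2+12a_2a_4\right|\le\frac1{16}.$$ The inequality is sharp: equality holds for $f_2(z)=z\exp\left(\int_0^z\frac{t^2+\cosh(t^2)-1}{t}\,dt\right)$, which belongs to $\mathcal{S}^*_{ch}$.
   Context: $\mathbb{D}=\{z\in\mathbb{C}:|z|<1\}$. $\mathcal{A}$ is the class of analytic functions $f$ on $\mathbb{D}$ with $f(0)=0$, $f'(0)=1$. For analytic $g,h$ on $\mathbb{D}$, $g\prec h$ means there is an analytic $\omega$ on $\mathbb{D}$ with $\omega(0)=0$, $|\omega(z)|<1$, and $g=h\circ\omega$. $\mathcal{S}^*_{ch}$ is the class of $f\in\mathcal{A}$ with $\frac{zf'(z)}{f(z)}\prec z+\cosh z$ on $\mathbb{D}$. The logarithmic coefficients $\gamma_n$ are defined by $F_f(z):=\log\frac{f(z)}{z}=2\sum_{n\ge1}\gamma_nz^n$, and $H_{2,1}(F_f/2):=\gamma_1\gamma_3-\gamma_2^2$. *)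

theory Defs
  imports "HOL-Complex_Analysis.Complex_Analysis"
begin

definition coeffA :: "(complex \<Rightarrow> complex) \<Rightarrow> nat \<Rightarrow> complex" where
  "coeffA f n = (deriv ^^ n) f 0 / fact n"

text \<open>The class S*_ch: f in A (analytic on the unit disk, f(0)=0, f'(0)=1) with
  z f'(z)/f(z) subordinate to z + cosh z.  The quotient z f'/f is required to be
  analytic on the disk, i.e. f has no zeros in the punctured disk; its value at 0
  is the removable value 1 = h(omega(0)).\<close>
definition S_ch :: "(complex \<Rightarrow> complex) set" where
  "S_ch = {f. f holomorphic_on ball 0 1 \<and> f 0 = 0 \<and> deriv f 0 = 1 \<and>
     (\<forall>z\<in>ball 0 1 - {0}. f z \<noteq> 0) \<and>
     (\<exists>\<omega>. \<omega> holomorphic_on ball 0 1 \<and> \<omega> 0 = 0 \<and>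
          (\<forall>z\<in>ball 0 1. norm (\<omega> z) < 1) \<and>
          (\<forall>z\<in>ball 0 1 - {0}. z * deriv f z / f z = \<omega> z + cosh (\<omega> z)))}"

definition gamma1 :: "(complex \<Rightarrow> complex) \<Rightarrow> complex" where
  "gamma1 f = coeffA f 2 / 2"

definition gamma2 :: "(complex \<Rightarrow> complex) \<Rightarrow> complex" where
  "gamma2 f = (coeffA f 3 - coeffA f 2 ^ 2 / 2) / 2"

definition gamma3 :: "(complex \<Rightarrow> complex) \<Rightarrow> complex" where
  "gamma3 f = (coeffA f 4 - coeffA f 2 * coeffA f 3 + coeffA f 2 ^ 3 / 3) / 2"

definition H21 :: "(complex \<Rightarrow> complex) \<Rightarrow> complex" where
  "H21 f = gamma1 f * gamma3 f - gamma2 f ^ 2"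

definition q2 :: "complex \<Rightarrow> complex" where
  "q2 t = (if t = 0 then 0 else (t^2 + cosh (t^2) - 1) / t)"

definition f2 :: "complex \<Rightarrow> complex" where
  "f2 z = z * exp (contour_integral (linepath 0 z) q2)"

end

(* Write z f'/f = omega + cosh omega with a Schwarz function omega whose Taylor coefficients
   are c1, c2, c3.  Comparing coefficients gives
     48 H21 = 4 c1 c3 + c1^2 c2 - 3 c2^2 - 3 c1^4 / 4.
   One step of Schur's algorithm (compose omega(z)/z with the disc automorphism moving c1 to 0)
   yields c2 = (1 - |c1|^2) b and c3 = (1 - |c1|^2) (beta - cnj c1 b^2) with |b| <= 1 and
   |beta| <= 1 - |b|^2.  The triangle inequality then reduces |48 H21| <= 3 to a polynomial
   inequality in |c1| and |b| on the unit square.  Equality holds for omega(z) = z^2, the Schwarz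
   function of f2. *)

theory Submission
  imports Defs
begin

unbundle no vec_syntax

section \<open>Coefficients of the subordination equation\<close>

lemma coeffA_eq_fps_expansion_nth: "coeffA f n = fps_expansion f 0 $ n"
  by (simp add: coeffA_def fps_expansion_def)

lemma has_fps_expansion_unique_nhds:
  fixes f g :: "complex \<Rightarrow> complex"
  assumes "f has_fps_expansion F" "g has_fps_expansion G"
    and "eventually (\<lambda>z. f z = g z) (nhds 0)"
  shows "F = G"
  using assms has_fps_expansion_cong fps_expansion_unique_complex by metis

lemma coeffA_cong_nhds:
  assumes "eventually (\<lambda>z. f z = g z) (nhds 0)"
  shows "coeffA f n = coeffA g n"
  unfolding coeffA_def by (simp add: higher_deriv_cong_ev[OF assms refl])

lemma coeffA_monomial: "coeffA (\<lambda>z. c * z ^ k) n = (if n = k then c else 0)"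
  using fps_nth_fps_expansion[OF
      has_fps_expansion_cmult_left[OF has_fps_expansion_fps_X_power[of k]], of c n]
  by (auto simp: coeffA_def)

lemma fps_X_deriv_eq_mult_coeffs:
  fixes F P :: "'a::field_char_0 fps"
  assumes "fps_X * fps_deriv F = F * P" "F $ 0 = 0" "F $ 1 = 1"
  shows "F $ 2 = P $ 1" "F $ 3 = (P $ 2 + (P $ 1) ^ 2) / 2"
    "F $ 4 = P $ 3 / 3 + P $ 1 * P $ 2 / 2 + (P $ 1) ^ 3 / 6"
proof -
  have eq: "of_nat n * F $ n = (\<Sum>i=0..n. F $ i * P $ (n - i))" for n
  proof -
    have "(fps_X * fps_deriv F) $ n = of_nat n * F $ n"
      by (cases n) simp_all
    then show ?thesis
      using assms(1) by (simp add: fps_mult_nth)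
  qed
  have P0: "P $ 0 = 1"
    using eq[of 1] assms(2,3) by simp
  show F2: "F $ 2 = P $ 1"
    using eq[of 2] assms(2,3) P0 by (simp add: numeral_eq_Suc)
  show F3: "F $ 3 = (P $ 2 + (P $ 1) ^ 2) / 2"
    using eq[of 3] assms(2,3) P0 F2 by (simp add: numeral_eq_Suc field_simps power2_eq_square)
  have "3 * F $ 4 = P $ 3 + P $ 1 * P $ 2 + P $ 1 * F $ 3"
    using eq[of 4] assms(2,3) P0 F2 by (simp add: numeral_eq_Suc)
  then show "F $ 4 = P $ 3 / 3 + P $ 1 * P $ 2 / 2 + (P $ 1) ^ 3 / 6"
    unfolding F3 by (simp add: field_simps power2_eq_square power3_eq_cube)
qed

lemma coeffA_cosh_comp:
  fixes \<omega> :: "complex \<Rightarrow> complex"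
  assumes "\<omega> analytic_on {0}" "\<omega> 0 = 0"
  shows "coeffA (\<lambda>z. cosh (\<omega> z)) 1 = 0"
    and "coeffA (\<lambda>z. cosh (\<omega> z)) 2 = coeffA \<omega> 1 ^ 2 / 2"
    and "coeffA (\<lambda>z. cosh (\<omega> z)) 3 = coeffA \<omega> 1 * coeffA \<omega> 2"
proof -
  define W where "W = fps_expansion \<omega> 0"
  define C where "C = fps_expansion (\<lambda>z. cosh (\<omega> z)) 0"
  define S where "S = fps_expansion (\<lambda>z. sinh (\<omega> z)) 0"
  have W: "\<omega> has_fps_expansion W"
    unfolding W_def using assms(1) by (rule analytic_at_imp_has_fps_expansion_0)
  have C: "(\<lambda>z. cosh (\<omega> z)) has_fps_expansion C"
    unfolding C_def using assms(1) by (intro analytic_at_imp_has_fps_expansion_0 analytic_intros)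
  have S: "(\<lambda>z. sinh (\<omega> z)) has_fps_expansion S"
    unfolding S_def using assms(1) by (intro analytic_at_imp_has_fps_expansion_0 analytic_intros)
  obtain U where U: "open U" "0 \<in> U" "\<omega> holomorphic_on U"
    using assms(1) analytic_at by blast
  have "eventually (\<lambda>z. z \<in> U) (nhds 0)"
    using U by (intro eventually_nhds_in_open)
  then have "eventually (\<lambda>z. deriv (\<lambda>z. cosh (\<omega> z)) z = sinh (\<omega> z) * deriv \<omega> z \<and>
                               deriv (\<lambda>z. sinh (\<omega> z)) z = cosh (\<omega> z) * deriv \<omega> z) (nhds 0)"
  proof eventually_elim
    case (elim z)
    then have "(\<omega> has_field_derivative deriv \<omega> z) (at z)"
      using U by (intro holomorphic_derivI)
    then show ?case
      by (auto intro!: DERIV_imp_deriv derivative_eq_intros)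
  qed
  then have "fps_deriv C = S * fps_deriv W" "fps_deriv S = C * fps_deriv W"
    by (auto intro!: has_fps_expansion_unique_nhds has_fps_expansion_deriv has_fps_expansion_mult C S W
        elim: eventually_mono)
  then have dC: "fps_deriv C $ n = (S * fps_deriv W) $ n"
    and dS: "fps_deriv S $ n = (C * fps_deriv W) $ n" for n
    by simp_all
  have C0: "C $ 0 = 1" and S0: "S $ 0 = 0"
    using assms(2) by (simp_all add: C_def S_def fps_expansion_def)
  have C1: "C $ 1 = 0" and S1: "S $ 1 = W $ 1"
    using dC[of 0] dS[of 0] S0 C0 by (simp_all add: fps_mult_nth)
  have C2: "C $ 2 = (W $ 1) ^ 2 / 2" and S2: "S $ 2 = W $ 2"
    using dC[of 1] dS[of 1] S0 C0 S1 C1 by (simp_all add: fps_mult_nth numeral_eq_Suc field_simps power2_eq_square)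
  have C3: "C $ 3 = W $ 1 * W $ 2"
    using dC[of 2] S0 S1 S2 by (simp add: fps_mult_nth numeral_eq_Suc field_simps)
  show "coeffA (\<lambda>z. cosh (\<omega> z)) 1 = 0"
    and "coeffA (\<lambda>z. cosh (\<omega> z)) 2 = coeffA \<omega> 1 ^ 2 / 2"
    and "coeffA (\<lambda>z. cosh (\<omega> z)) 3 = coeffA \<omega> 1 * coeffA \<omega> 2"
    using C1 C2 C3 by (simp_all add: coeffA_eq_fps_expansion_nth C_def W_def)
qed

lemma coeffA_starlike_cosh:
  fixes f \<omega> :: "complex \<Rightarrow> complex"
  assumes f: "f analytic_on {0}" "f 0 = 0" "deriv f 0 = 1"
    and \<omega>: "\<omega> analytic_on {0}" "\<omega> 0 = 0"
    and eq: "eventually (\<lambda>z. z * deriv f z = f z * (\<omega> z + cosh (\<omega> z))) (nhds 0)"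
  shows "coeffA f 2 = coeffA \<omega> 1"
    and "coeffA f 3 = coeffA \<omega> 2 / 2 + 3 * coeffA \<omega> 1 ^ 2 / 4"
    and "coeffA f 4 = coeffA \<omega> 3 / 3 + 5 * coeffA \<omega> 1 * coeffA \<omega> 2 / 6
                        + 5 * coeffA \<omega> 1 ^ 3 / 12"
proof -
  define F where "F = fps_expansion f 0"
  define P where "P = fps_expansion \<omega> 0 + fps_expansion (\<lambda>z. cosh (\<omega> z)) 0"
  have F: "f has_fps_expansion F"
    unfolding F_def using f(1) by (rule analytic_at_imp_has_fps_expansion_0)
  have P: "(\<lambda>z. \<omega> z + cosh (\<omega> z)) has_fps_expansion P"
    unfolding P_def using \<omega>(1)
    by (intro has_fps_expansion_add analytic_at_imp_has_fps_expansion_0 analytic_intros)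
  have "fps_X * fps_deriv F = F * P"
    using has_fps_expansion_mult[OF has_fps_expansion_fps_X has_fps_expansion_deriv[OF F]]
      has_fps_expansion_mult[OF F P] eq
    by (rule has_fps_expansion_unique_nhds)
  moreover have "F $ 0 = 0" "F $ 1 = 1"
    using f(2,3) by (simp_all add: F_def fps_expansion_def)
  ultimately have F_coeffs: "F $ 2 = P $ 1" "F $ 3 = (P $ 2 + (P $ 1) ^ 2) / 2"
    "F $ 4 = P $ 3 / 3 + P $ 1 * P $ 2 / 2 + (P $ 1) ^ 3 / 6"
    by (rule fps_X_deriv_eq_mult_coeffs)+
  have "P $ n = coeffA \<omega> n + coeffA (\<lambda>z. cosh (\<omega> z)) n" for n
    by (simp add: P_def coeffA_eq_fps_expansion_nth)
  then have "P $ 1 = coeffA \<omega> 1" "P $ 2 = coeffA \<omega> 2 + coeffA \<omega> 1 ^ 2 / 2"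
    "P $ 3 = coeffA \<omega> 3 + coeffA \<omega> 1 * coeffA \<omega> 2"
    using coeffA_cosh_comp[OF \<omega>] by simp_all
  with F_coeffs show "coeffA f 2 = coeffA \<omega> 1"
    and "coeffA f 3 = coeffA \<omega> 2 / 2 + 3 * coeffA \<omega> 1 ^ 2 / 4"
    and "coeffA f 4 = coeffA \<omega> 3 / 3 + 5 * coeffA \<omega> 1 * coeffA \<omega> 2 / 6
                        + 5 * coeffA \<omega> 1 ^ 3 / 12"
    unfolding coeffA_eq_fps_expansion_nth[of f, folded F_def]
    by (simp_all add: field_simps power2_eq_square power3_eq_cube)
qed

lemma H21_eq_coeffA:
  "H21 f = (coeffA f 2 ^ 4 - 12 * coeffA f 3 ^ 2 + 12 * coeffA f 2 * coeffA f 4) / 48"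
  unfolding H21_def gamma1_def gamma2_def gamma3_def
  by (simp add: field_simps power2_eq_square power3_eq_cube power4_eq_xxxx)

lemma H21_starlike_cosh:
  fixes f \<omega> :: "complex \<Rightarrow> complex"
  assumes "f analytic_on {0}" "f 0 = 0" "deriv f 0 = 1" "\<omega> analytic_on {0}" "\<omega> 0 = 0"
    and "eventually (\<lambda>z. z * deriv f z = f z * (\<omega> z + cosh (\<omega> z))) (nhds 0)"
  shows "48 * H21 f = 4 * coeffA \<omega> 1 * coeffA \<omega> 3 + coeffA \<omega> 1 ^ 2 * coeffA \<omega> 2
            - 3 * coeffA \<omega> 2 ^ 2 - 3 * coeffA \<omega> 1 ^ 4 / 4"
  unfolding H21_eq_coeffA coeffA_starlike_cosh[OF assms]
  by (simp add: field_simps power2_eq_square power3_eq_cube power4_eq_xxxx)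

section \<open>Schwarz functions\<close>

definition schwarz_function :: "(complex \<Rightarrow> complex) \<Rightarrow> bool" where
  "schwarz_function \<omega> \<longleftrightarrow>
     \<omega> holomorphic_on ball 0 1 \<and> \<omega> 0 = 0 \<and> (\<forall>z\<in>ball 0 1. norm (\<omega> z) < 1)"

lemma eventually_norm_less_1_nhds_0: "eventually (\<lambda>z::complex. norm z < 1) (nhds 0)"
proof -
  have "eventually (\<lambda>z. z \<in> ball (0::complex) 1) (nhds 0)"
    by (intro eventually_nhds_in_open) auto
  then show ?thesis
    by eventually_elim simp
qed

lemma coeffA_rotation:
  assumes "\<And>z. norm z < 1 \<Longrightarrow> \<omega> z = \<alpha> * z"
  shows "coeffA \<omega> n = (if n = 1 then \<alpha> else 0)"
proof -
  have "eventually (\<lambda>z. \<omega> z = \<alpha> * z ^ 1) (nhds 0)"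
    using eventually_norm_less_1_nhds_0 by eventually_elim (simp add: assms)
  then have "coeffA \<omega> n = coeffA (\<lambda>z. \<alpha> * z ^ 1) n"
    by (rule coeffA_cong_nhds)
  then show ?thesis
    by (simp only: coeffA_monomial)
qed

lemma schwarz_function_rotation:
  assumes "schwarz_function \<omega>"
    and "(\<exists>z. norm z < 1 \<and> z \<noteq> 0 \<and> norm (\<omega> z) = norm z) \<or> norm (coeffA \<omega> 1) = 1"
  obtains \<alpha> where "norm \<alpha> = 1" "\<And>z. norm z < 1 \<Longrightarrow> \<omega> z = \<alpha> * z"
  using assms Schwarz_Lemma(3)[of \<omega> 0] by (auto simp: schwarz_function_def coeffA_def)

lemma schwarz_function_coeffA_eq_0_if_norm_coeffA_1_eq_1:
  assumes "schwarz_function \<omega>" "norm (coeffA \<omega> 1) = 1" "n \<noteq> 1"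
  shows "coeffA \<omega> n = 0"
proof -
  obtain \<alpha> where "\<And>z. norm z < 1 \<Longrightarrow> \<omega> z = \<alpha> * z"
    using schwarz_function_rotation[OF assms(1)] assms(2) by blast
  from coeffA_rotation[OF this] show ?thesis
    using assms(3) by simp
qed

lemma schwarz_function_norm_coeffA_1_le:
  assumes "schwarz_function \<omega>"
  shows "norm (coeffA \<omega> 1) \<le> 1"
  using assms Schwarz_Lemma(2)[of \<omega> 0] by (simp add: schwarz_function_def coeffA_def)

lemma schwarz_function_factor:
  assumes \<omega>: "schwarz_function \<omega>" and a: "norm (coeffA \<omega> 1) < 1"
  obtains h where "h holomorphic_on ball 0 1" "\<And>z. norm z < 1 \<Longrightarrow> \<omega> z = z * h z"
    "h 0 = coeffA \<omega> 1" "\<And>z. norm z < 1 \<Longrightarrow> norm (h z) < 1"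
proof -
  have "\<omega> holomorphic_on ball 0 1" "\<omega> 0 = 0"
    using \<omega> by (simp_all add: schwarz_function_def)
  then obtain h where h: "h holomorphic_on ball 0 1" "\<And>z. norm z < 1 \<Longrightarrow> \<omega> z = z * h z"
    and "deriv \<omega> 0 = h 0"
    using Schwarz3 by blast
  then have h0: "h 0 = coeffA \<omega> 1"
    by (simp add: coeffA_def)
  have "norm (h z) < 1" if z: "norm z < 1" for z
  proof (cases "z = 0")
    case True
    then show ?thesis using a h0 by simp
  next
    case False
    have "norm (\<omega> z) \<noteq> norm z"
    proof
      assume "norm (\<omega> z) = norm z"
      with z False obtain \<alpha> where "norm \<alpha> = 1" "\<And>z. norm z < 1 \<Longrightarrow> \<omega> z = \<alpha> * z"
        using schwarz_function_rotation[OF \<omega>] by blast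
      with coeffA_rotation[of \<omega> \<alpha> 1] show False
        using a by simp
    qed
    moreover have "norm (\<omega> z) \<le> norm z"
      using \<omega> z Schwarz_Lemma(1)[of \<omega> z] by (simp add: schwarz_function_def)
    ultimately show ?thesis
      using False z by (simp add: h(2) norm_mult)
  qed
  with h h0 show ?thesis
    using that by blast
qed

lemma schwarz_function_Moebius_comp:
  assumes "h holomorphic_on ball 0 1" "\<And>z. norm z < 1 \<Longrightarrow> norm (h z) < 1" "h 0 = a"
  shows "schwarz_function (\<lambda>z. Moebius_function 0 a (h z))"
proof -
  have a: "norm a < 1"
    using assms(2)[of 0] assms(3) by simp
  have "h ` ball 0 1 \<subseteq> ball 0 1"
    using assms(2) by auto
  then have "(\<lambda>z. Moebius_function 0 a (h z)) holomorphic_on ball 0 1"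
    using holomorphic_on_compose_gen[OF assms(1) Moebius_function_holomorphic[OF a]]
    by (simp add: o_def)
  moreover have "norm (Moebius_function 0 a (h z)) < 1" if "norm z < 1" for z
    using a assms(2)[OF that] by (rule Moebius_function_norm_lt_1)
  ultimately show ?thesis
    using assms(3) by (simp add: schwarz_function_def Moebius_function_eq_zero)
qed

lemma schwarz_function_schur_transform:
  assumes \<omega>: "schwarz_function \<omega>" and a: "norm (coeffA \<omega> 1) < 1"
  obtains \<psi> where "schwarz_function \<psi>"
    "coeffA \<omega> 2 = (1 - norm (coeffA \<omega> 1) ^ 2) * coeffA \<psi> 1"
    "coeffA \<omega> 3 = (1 - norm (coeffA \<omega> 1) ^ 2) * coeffA \<psi> 2
                    - cnj (coeffA \<omega> 1) * coeffA \<omega> 2 * coeffA \<psi> 1"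
proof -
  define a where "a = coeffA \<omega> 1"
  obtain h where h: "h holomorphic_on ball 0 1" "\<And>z. norm z < 1 \<Longrightarrow> \<omega> z = z * h z"
    and h0: "h 0 = a" and h_lt: "\<And>z. norm z < 1 \<Longrightarrow> norm (h z) < 1"
    using schwarz_function_factor[OF \<omega> a] unfolding a_def by blast
  define \<psi> where "\<psi> = (\<lambda>z. Moebius_function 0 a (h z))"
  have \<psi>: "schwarz_function \<psi>"
    unfolding \<psi>_def using h(1) h_lt h0 by (rule schwarz_function_Moebius_comp)
  have den: "1 - cnj a * h z \<noteq> 0" if "norm z < 1" for z
  proof -
    have "norm (cnj a * h z) < 1"
      using norm_mult_less[of "cnj a" 1 "h z" 1] h_lt[OF that] h_lt[of 0] h0 by simp
    then show ?thesis
      by auto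
  qed
  define W H Q where "W = fps_expansion \<omega> 0" "H = fps_expansion h 0" "Q = fps_expansion \<psi> 0"
  have W: "\<omega> has_fps_expansion W" and H: "h has_fps_expansion H" and Q: "\<psi> has_fps_expansion Q"
    using \<omega> h(1) \<psi> unfolding W_H_Q_def schwarz_function_def
    by (auto intro!: has_fps_expansion_fps_expansion[of "ball 0 1"])
  have "eventually (\<lambda>z. \<omega> z = z * h z) (nhds 0)"
    using eventually_norm_less_1_nhds_0 by eventually_elim (rule h(2))
  then have "W = fps_X * H"
    by (rule has_fps_expansion_unique_nhds[OF W has_fps_expansion_mult[OF has_fps_expansion_fps_X H]])
  then have W_H: "W $ Suc n = H $ n" for n
    by simp
  have "eventually (\<lambda>z. \<psi> z * (1 - cnj a * h z) = h z - a) (nhds 0)"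
    using eventually_norm_less_1_nhds_0
  proof eventually_elim
    case (elim z)
    with den[of z] show ?case
      by (simp add: \<psi>_def Moebius_function_simple)
  qed
  then have "Q * (1 - fps_const (cnj a) * H) = H - fps_const a"
    by (rule has_fps_expansion_unique_nhds[OF
          has_fps_expansion_mult[OF Q has_fps_expansion_diff[OF has_fps_expansion_1
            has_fps_expansion_cmult_left[OF H]]]
          has_fps_expansion_diff[OF H has_fps_expansion_const]])
  then have Q_H: "(Q * (1 - fps_const (cnj a) * H)) $ n = (H - fps_const a) $ n" for n
    by simp
  have H0: "H $ 0 = a" and Q0: "Q $ 0 = 0"
    using h0 \<psi> by (simp_all add: W_H_Q_def fps_expansion_def schwarz_function_def)
  have s: "1 - cnj a * a = complex_of_real (1 - norm a ^ 2)"
    by (metis complex_norm_square mult.commute of_real_1 of_real_diff)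
  have Q1: "(1 - norm a ^ 2) * Q $ 1 = H $ 1"
    using Q_H[of 1] H0 Q0 s by (simp add: fps_mult_nth mult.commute)
  have Q2: "(1 - norm a ^ 2) * Q $ 2 - cnj a * H $ 1 * Q $ 1 = H $ 2"
    using Q_H[of 2] H0 Q0 s by (simp add: fps_mult_nth numeral_eq_Suc algebra_simps)
  have "coeffA \<omega> (Suc n) = H $ n" "coeffA \<psi> n = Q $ n" for n
    by (simp_all add: coeffA_eq_fps_expansion_nth W_H_Q_def[symmetric] W_H)
  from \<psi> Q1 Q2 this[of 1] this[of 2] show ?thesis
    by (intro that[of \<psi>]) (simp_all add: a_def numeral_eq_Suc)
qed

lemma schwarz_function_norm_coeffA_2_le:
  assumes \<omega>: "schwarz_function \<omega>"
  shows "norm (coeffA \<omega> 2) \<le> 1 - norm (coeffA \<omega> 1) ^ 2"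
proof (cases "norm (coeffA \<omega> 1) = 1")
  case True
  then show ?thesis
    using schwarz_function_coeffA_eq_0_if_norm_coeffA_1_eq_1[OF \<omega> True, of 2] by simp
next
  case False
  with schwarz_function_norm_coeffA_1_le[OF \<omega>] have a: "norm (coeffA \<omega> 1) < 1"
    by simp
  then obtain \<psi> where \<psi>: "schwarz_function \<psi>"
    and c2: "coeffA \<omega> 2 = (1 - norm (coeffA \<omega> 1) ^ 2) * coeffA \<psi> 1"
    using schwarz_function_schur_transform[OF \<omega>] by blast
  have r: "0 \<le> 1 - norm (coeffA \<omega> 1) ^ 2"
    using a by (simp add: abs_square_le_1)
  have "norm (coeffA \<omega> 2) = (1 - norm (coeffA \<omega> 1) ^ 2) * norm (coeffA \<psi> 1)"
    unfolding c2 norm_mult norm_of_real using r by simp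
  also have "\<dots> \<le> 1 - norm (coeffA \<omega> 1) ^ 2"
    using r schwarz_function_norm_coeffA_1_le[OF \<psi>] by (simp add: mult_left_le)
  finally show ?thesis .
qed

lemma schwarz_function_coeffA_2_3_representation:
  assumes \<omega>: "schwarz_function \<omega>"
  obtains b \<beta> :: complex where "norm b \<le> 1" "norm \<beta> \<le> 1 - norm b ^ 2"
    "coeffA \<omega> 2 = (1 - norm (coeffA \<omega> 1) ^ 2) * b"
    "coeffA \<omega> 3 = (1 - norm (coeffA \<omega> 1) ^ 2) * (\<beta> - cnj (coeffA \<omega> 1) * b ^ 2)"
proof (cases "norm (coeffA \<omega> 1) = 1")
  case True
  have "coeffA \<omega> 2 = 0" "coeffA \<omega> 3 = 0"
    using schwarz_function_coeffA_eq_0_if_norm_coeffA_1_eq_1[OF \<omega> True] by simp_all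
  then show ?thesis
    by (intro that[of 0 0]) simp_all
next
  case False
  with schwarz_function_norm_coeffA_1_le[OF \<omega>] have "norm (coeffA \<omega> 1) < 1"
    by simp
  then obtain \<psi> where \<psi>: "schwarz_function \<psi>"
    and c2: "coeffA \<omega> 2 = (1 - norm (coeffA \<omega> 1) ^ 2) * coeffA \<psi> 1"
    and c3: "coeffA \<omega> 3 = (1 - norm (coeffA \<omega> 1) ^ 2) * coeffA \<psi> 2
                             - cnj (coeffA \<omega> 1) * coeffA \<omega> 2 * coeffA \<psi> 1"
    using schwarz_function_schur_transform[OF \<omega>] by blast
  show ?thesis
  proof (rule that)
    show "coeffA \<omega> 3
        = (1 - norm (coeffA \<omega> 1) ^ 2) * (coeffA \<psi> 2 - cnj (coeffA \<omega> 1) * coeffA \<psi> 1 ^ 2)"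
      unfolding c3 c2 by (simp add: algebra_simps power2_eq_square)
  qed (fact c2 schwarz_function_norm_coeffA_1_le[OF \<psi>] schwarz_function_norm_coeffA_2_le[OF \<psi>])+
qed

section \<open>The sharp bound\<close>

lemma H21_majorant_le:
  fixes x u :: real
  assumes x: "0 \<le> x" "x \<le> 1" and u: "0 \<le> u" "u \<le> 1"
  shows "4*x*(1-x^2)*(1-u^2) + 4*x^2*(1-x^2)*u^2 + x^2*(1-x^2)*u + 3*(1-x^2)^2*u^2 + 3*x^4/4 \<le> 3"
proof -
  define r where "r = 1 - x^2"
  define v where "v = u^2"
  have r: "0 \<le> r"
    using x by (simp add: r_def power_le_one)
  have v: "0 \<le> v" "v \<le> 1"
    using u by (auto simp: v_def power_le_one)
  have "u \<le> (1 + v) / 2"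
    using zero_le_power2[of "1 - u"] by (simp add: v_def power2_eq_square algebra_simps)
  then have u_le: "x^2*r*u \<le> x^2*r*((1 + v)/2)"
    using r by (intro mult_left_mono) auto
  \<comment> \<open>The bound is now affine in \<open>v\<close>, so it suffices to check \<open>v = 0\<close> and \<open>v = 1\<close>.\<close>
  define G0 where "G0 = 4*x*r + x^2*r/2 + 3*x^4/4"
  define G1 where "G1 = 4*x^2*r + x^2*r + 3*r^2 + 3*x^4/4"
  have G1: "G1 \<le> 3"
  proof -
    have "G1 = 3 - x^2 - 5/4*x^4"
      by (simp add: G1_def r_def algebra_simps power2_eq_square power4_eq_xxxx)
    then show ?thesis
      using zero_le_power2[of x] zero_le_power[OF x(1), of 4] by linarith
  qed
  have G0: "G0 \<le> 3"
  proof -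
    have "x^3 - x + 1/2 = x*(x-1)^2 + 2*(x-1/2)^2"
      by (simp add: algebra_simps power2_eq_square power3_eq_cube)
    then have "0 \<le> x^3 - x + 1/2"
      using x by simp
    then have "4*x*r \<le> 2"
      by (simp add: r_def algebra_simps power2_eq_square power3_eq_cube)
    moreover have "x^2*r/2 + 3*x^4/4 = x^2/2 + x^4/4"
      by (simp add: r_def field_simps power2_eq_square power4_eq_xxxx)
    moreover have "x^2 \<le> 1" "x^4 \<le> 1"
      using x by (auto simp: power_le_one)
    ultimately show ?thesis
      unfolding G0_def by linarith
  qed
  have "4*x*r*(1-v) + 4*x^2*r * v + x^2*r*u + 3*r^2 * v + 3*x^4/4 \<le> (1-v) * G0 + v * G1"
    using u_le by (simp add: G0_def G1_def field_simps)
  also have "\<dots> \<le> (1-v) * 3 + v * 3"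
    using G0 G1 v by (intro add_mono mult_left_mono) auto
  finally show ?thesis
    by (simp add: r_def v_def)
qed

lemma norm_H21_schwarz_poly_le:
  fixes a b \<beta> :: complex
  assumes a: "norm a \<le> 1" and b: "norm b \<le> 1" and \<beta>: "norm \<beta> \<le> 1 - norm b ^ 2"
  defines "r \<equiv> 1 - norm a ^ 2"
  shows "norm (4 * a * (r * (\<beta> - cnj a * b ^ 2)) + a ^ 2 * (r * b)
               - 3 * (r * b) ^ 2 - 3 * a ^ 4 / 4) \<le> 3"
proof -
  have r: "0 \<le> r"
    using a by (simp add: r_def abs_square_le_1)
  have "4 * a * (r * (\<beta> - cnj a * b ^ 2)) + a ^ 2 * (r * b) - 3 * (r * b) ^ 2 - 3 * a ^ 4 / 4
      = 4 * a * r * \<beta> - 4 * (a * cnj a) * r * b ^ 2 + a ^ 2 * r * b - 3 * (r * b) ^ 2 - 3 * a ^ 4 / 4"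
    by (simp add: algebra_simps)
  also have "norm \<dots> \<le> norm (4 * a * r * \<beta>) + norm (4 * (a * cnj a) * r * b ^ 2)
      + norm (a ^ 2 * r * b) + norm (3 * (r * b) ^ 2) + norm (3 * a ^ 4 / 4)"
    by (smt (verit) norm_triangle_ineq norm_triangle_ineq4)
  also have "\<dots> = 4 * norm a * r * norm \<beta> + 4 * norm a ^ 2 * r * norm b ^ 2
      + norm a ^ 2 * r * norm b + 3 * r ^ 2 * norm b ^ 2 + 3 * norm a ^ 4 / 4"
    using r by (simp add: norm_mult norm_power power_mult_distrib power2_eq_square)
  also have "\<dots> \<le> 4 * norm a * r * (1 - norm b ^ 2) + 4 * norm a ^ 2 * r * norm b ^ 2
      + norm a ^ 2 * r * norm b + 3 * r ^ 2 * norm b ^ 2 + 3 * norm a ^ 4 / 4"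
    using r \<beta> by (simp add: mult_left_mono)
  also have "\<dots> \<le> 3"
    unfolding r_def using a b by (intro H21_majorant_le) auto
  finally show ?thesis .
qed

lemma S_chE:
  assumes "f \<in> S_ch"
  obtains \<omega> where "schwarz_function \<omega>" "f analytic_on {0}" "f 0 = 0" "deriv f 0 = 1"
    "eventually (\<lambda>z. z * deriv f z = f z * (\<omega> z + cosh (\<omega> z))) (nhds 0)"
proof -
  from assms obtain \<omega> where hol: "f holomorphic_on ball 0 1" and f0: "f 0 = 0" "deriv f 0 = 1"
    and nz: "\<forall>z\<in>ball 0 1 - {0}. f z \<noteq> 0" and \<omega>: "schwarz_function \<omega>"
    and eq: "\<forall>z\<in>ball 0 1 - {0}. z * deriv f z / f z = \<omega> z + cosh (\<omega> z)"
    unfolding S_ch_def schwarz_function_def by blast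
  have "z * deriv f z = f z * (\<omega> z + cosh (\<omega> z))" if "norm z < 1" for z
    using that f0 nz eq by (cases "z = 0") (auto simp: field_simps)
  then have "eventually (\<lambda>z. z * deriv f z = f z * (\<omega> z + cosh (\<omega> z))) (nhds 0)"
    using eventually_norm_less_1_nhds_0 by (auto elim: eventually_mono)
  moreover have "f analytic_on {0}"
    using hol by (rule holomorphic_on_imp_analytic_at) auto
  ultimately show ?thesis
    using that \<omega> f0 by blast
qed

lemma norm_H21_S_ch_le:
  assumes "f \<in> S_ch"
  shows "norm (H21 f) \<le> 1 / 16"
proof -
  obtain \<omega> where \<omega>: "schwarz_function \<omega>" and f: "f analytic_on {0}" "f 0 = 0" "deriv f 0 = 1"
    and eq: "eventually (\<lambda>z. z * deriv f z = f z * (\<omega> z + cosh (\<omega> z))) (nhds 0)"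
    using assms by (rule S_chE)
  then have "\<omega> analytic_on {0}" "\<omega> 0 = 0"
    using holomorphic_on_imp_analytic_at[of \<omega> "ball 0 1" 0] by (simp_all add: schwarz_function_def)
  note H21 = H21_starlike_cosh[OF f this eq]
  obtain b \<beta> :: complex where b: "norm b \<le> 1" "norm \<beta> \<le> 1 - norm b ^ 2"
    and c: "coeffA \<omega> 2 = (1 - norm (coeffA \<omega> 1) ^ 2) * b"
      "coeffA \<omega> 3 = (1 - norm (coeffA \<omega> 1) ^ 2) * (\<beta> - cnj (coeffA \<omega> 1) * b ^ 2)"
    using \<omega> by (rule schwarz_function_coeffA_2_3_representation)
  have "norm (48 * H21 f) \<le> 3"
    unfolding H21 c
    by (rule norm_H21_schwarz_poly_le[OF schwarz_function_norm_coeffA_1_le[OF \<omega>] b])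
  then show ?thesis
    by (simp add: norm_mult)
qed

section \<open>The extremal function\<close>

lemma q2_holomorphic: "q2 holomorphic_on UNIV"
proof -
  define g where "g = (\<lambda>t::complex. t^2 + cosh (t^2) - 1)"
  have "g holomorphic_on UNIV"
    unfolding g_def by (simp add: analytic_on_open[symmetric] analytic_intros)
  then have "(\<lambda>z. if z = 0 then deriv g 0 else (g z - g 0) / (z - 0)) holomorphic_on UNIV"
    by (rule pole_lemma) simp
  also have "deriv g 0 = 0"
    unfolding g_def by (rule DERIV_imp_deriv) (auto intro!: derivative_eq_intros)
  also have "(\<lambda>z. if z = 0 then 0 else (g z - g 0) / (z - 0)) = q2"
    by (simp add: g_def q2_def fun_eq_iff)
  finally show ?thesis .
qed

lemma has_field_derivative_integral_q2:
  "((\<lambda>z. contour_integral (linepath 0 z) q2) has_field_derivative q2 z) (at z)"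
proof (rule triangle_contour_integrals_starlike_primitive[of UNIV q2 0 z])
  show "continuous_on UNIV q2"
    by (rule holomorphic_on_imp_continuous_on[OF q2_holomorphic])
  fix b c :: complex
  show "contour_integral (linepath 0 b) q2 + contour_integral (linepath b c) q2 +
        contour_integral (linepath c 0) q2 = 0"
    by (rule has_chain_integral_chain_integral3[OF Cauchy_theorem_triangle])
      (rule holomorphic_on_subset[OF q2_holomorphic], simp)
qed auto

lemma f2_has_field_derivative:
  "(f2 has_field_derivative
     exp (contour_integral (linepath 0 z) q2) * (1 + z * q2 z)) (at z)"
  unfolding f2_def
  by (rule derivative_eq_intros has_field_derivative_integral_q2 refl | simp add: algebra_simps)+

lemma f2_holomorphic: "f2 holomorphic_on UNIV"
  using f2_has_field_derivative by (auto simp: holomorphic_on_open)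

lemma deriv_f2_0: "deriv f2 0 = 1"
  using DERIV_imp_deriv[OF f2_has_field_derivative[of 0]] by simp

lemma f2_log_deriv: "z * deriv f2 z = f2 z * (z^2 + cosh (z^2))"
  by (cases "z = 0")
    (simp_all add: DERIV_imp_deriv[OF f2_has_field_derivative] f2_def q2_def field_simps power2_eq_square)

lemma f2_in_S_ch: "f2 \<in> S_ch"
proof -
  have "f2 holomorphic_on ball 0 1"
    using f2_holomorphic by (rule holomorphic_on_subset) simp
  moreover have "(\<lambda>z. z^2) holomorphic_on ball 0 1"
    by (intro holomorphic_intros)
  moreover have "norm (z^2) < 1" if "z \<in> ball 0 1" for z :: complex
    using that norm_mult_less[of z 1 z 1] by (simp add: power2_eq_square)
  moreover have "\<forall>z\<in>ball 0 1 - {0}. z * deriv f2 z / f2 z = z^2 + cosh (z^2)"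
    by (simp add: f2_log_deriv f2_def)
  ultimately show ?thesis
    unfolding S_ch_def using deriv_f2_0 by (auto simp: f2_def intro!: exI[of _ "\<lambda>z. z^2"])
qed

lemma H21_f2: "H21 f2 = - 1 / 16"
proof -
  have "f2 analytic_on {0}"
    using f2_holomorphic by (rule holomorphic_on_imp_analytic_at) simp_all
  moreover have "(\<lambda>z::complex. z^2) analytic_on {0}"
    by (intro analytic_intros)
  moreover have "eventually (\<lambda>z. z * deriv f2 z = f2 z * (z^2 + cosh (z^2))) (nhds 0)"
    by (simp add: f2_log_deriv)
  ultimately have "48 * H21 f2 = 4 * coeffA (\<lambda>z. z^2) 1 * coeffA (\<lambda>z. z^2) 3
      + coeffA (\<lambda>z. z^2) 1 ^ 2 * coeffA (\<lambda>z. z^2) 2 - 3 * coeffA (\<lambda>z. z^2) 2 ^ 2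
      - 3 * coeffA (\<lambda>z. z^2) 1 ^ 4 / 4"
    using deriv_f2_0 by (intro H21_starlike_cosh) (simp_all add: f2_def)
  then have "48 * H21 f2 = -3"
    using coeffA_monomial[of 1 2] by simp
  then show ?thesis
    by (auto simp: field_simps)
qed

theorem theorem2p2:
  shows "(\<forall>f\<in>S_ch.
            norm (H21 f) =
              norm (coeffA f 2 ^ 4 - 12 * coeffA f 3 ^ 2 + 12 * coeffA f 2 * coeffA f 4) / 48
          \<and> norm (H21 f) \<le> 1 / 16)
         \<and> f2 \<in> S_ch \<and> norm (H21 f2) = 1 / 16"
  using norm_H21_S_ch_le f2_in_S_ch H21_f2 by (auto simp: H21_eq_coeffA norm_divide)

end
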